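(* Let $f_{\mathrm{cost}}:[0,1]\to[0,\infty)$ be concave with $f_{\mathrm{cost}}(0)=0$, and for a distribution $p$ let $F_{\mathrm{cost}}(p)=\sum_i f_{\mathrm{cost}}(p(i))$. Let $r\triangleq\max_{0<q<p\le1}\left(\frac{f_{\mathrm{cost}}(q)}{f_{\mathrm{cost}}(p)}-\frac qp\right)$. If $r<1$, then for every set $S$ of $m=2$ discrete probability distributions, the greedy coupling $\mathcal G_S$ satisfies $F_{\mathrm{cost}}(\mathcal G_S)\le\frac{1}{1-r}F_{\mathrm{cost}}(C)$ for every coupling $C$ of $S$; i.e., the greedy algorithm is a $\frac1{1-r}$-multiplicative approximation for the minimum-$F_{\mathrm{cost}}$ coupling.
   Context: A coupling of two distributions $p,q$ is a joint distribution with marginals $p$ and $q$; its cost is $F_{\mathrm{cost}}$ applied to its vector of probabilities. Greedy coupling algorithm: maintain the remaining masses of the states of each distribution in $S$. Repeatedly: let $r'=\min_{p\in S}\max_j p(j)$; if $r'=0$ stop; otherwise append $r'$ as the next state of $\mathcal G_S$ and subtract $r'$ from the largest remaining state of every distribution (ties broken arbitrarily). $\mathcal G_S$ is the resulting list of state masses. *)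

theory Defs
  imports "HOL-Analysis.Analysis"
begin

definition supp :: "('a \<Rightarrow> real) \<Rightarrow> 'a set" where
  "supp p = {x. p x \<noteq> 0}"

definition is_dist :: "('a \<Rightarrow> real) \<Rightarrow> bool" where
  "is_dist p \<longleftrightarrow> finite (supp p) \<and> (\<forall>x. 0 \<le> p x) \<and> sum p (supp p) = 1"

definition is_coupling :: "('a \<times> 'b \<Rightarrow> real) \<Rightarrow> ('a \<Rightarrow> real) \<Rightarrow> ('b \<Rightarrow> real) \<Rightarrow> bool" where
  "is_coupling C p q \<longleftrightarrow> is_dist C
     \<and> (\<forall>a. (\<Sum>b\<in>{b. C (a, b) \<noteq> 0}. C (a, b)) = p a)
     \<and> (\<forall>b. (\<Sum>a\<in>{a. C (a, b) \<noteq> 0}. C (a, b)) = q b)"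

text \<open>F_cost applied to the vector of probabilities (states of mass 0 contribute f 0 = 0).\<close>
definition F_cost :: "(real \<Rightarrow> real) \<Rightarrow> ('a \<Rightarrow> real) \<Rightarrow> real" where
  "F_cost f p = (\<Sum>x\<in>supp p. f (p x))"

definition maxmass :: "('a \<Rightarrow> real) \<Rightarrow> real" where
  "maxmass p = Max (insert 0 (p ` supp p))"

text \<open>The greedy coupling algorithm for two distributions, as a relation between the
  current remaining masses and the produced list of state masses; ties in choosing a
  largest remaining state are broken arbitrarily (any choice is a valid run).\<close>
inductive greedy_run :: "('a \<Rightarrow> real) \<Rightarrow> ('b \<Rightarrow> real) \<Rightarrow> real list \<Rightarrow> bool" where
  stop: "min (maxmass p) (maxmass q) = 0 \<Longrightarrow> greedy_run p q []"
| step: "\<lbrakk> r' = min (maxmass p) (maxmass q); r' \<noteq> 0;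
           p a = maxmass p; q b = maxmass q;
           greedy_run (p(a := p a - r')) (q(b := q b - r')) G \<rbrakk>
         \<Longrightarrow> greedy_run p q (r' # G)"

end

theory Submission
  imports Defs
begin

text \<open>
  Write \<open>h v = f v / v\<close>; by concavity \<open>h\<close> is antitone on \<open>(0, 1]\<close>. For (sub)distributions
  \<open>p\<close>, \<open>q\<close> take the measure on \<open>(0, 1]\<close> whose tail at \<open>t\<close> is the smaller of the \<open>p\<close>-mass
  and the \<open>q\<close>-mass carried by states of mass at least \<open>t\<close>, and let the potential be the
  integral of \<open>h\<close> against it. A coupling \<open>C\<close> costs at least the potential: a cell \<open>(a, b)\<close>
  has \<open>C (a, b) \<le> min (p a) (q b)\<close>, so its cost is at least \<open>C (a, b) * h (min (p a) (q b))\<close>,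
  and the push-forward of \<open>C\<close> along \<open>(a, b) \<mapsto> min (p a) (q b)\<close> has total mass 1 and tails
  dominated by those of the measure; Abel summation against the antitone \<open>h\<close> concludes.
  A greedy step removing \<open>p a \<le> q b\<close> from the two largest states deletes the atom at \<open>p a\<close>
  and, if the leftover \<open>w = q b - p a\<close> is below \<open>p a\<close>, moves mass \<open>w\<close> from \<open>p a\<close> to \<open>w\<close>.
  This lowers the potential by at least \<open>f (p a) - (f w - w / p a * f (p a)) \<ge> (1 - r) f (p a)\<close>.
  Summing over the run, \<open>(1 - r) F(G) \<le> potential \<le> F(C)\<close>.
\<close>

lemma sum_mult_antimono_ge_of_tails_nonpos:
  fixes h d :: "'a::linorder \<Rightarrow> real"
  assumes "finite V" "V \<noteq> {}" "antimono_on V h"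
    and "\<forall>t\<in>V. (\<Sum>v\<in>{v\<in>V. t \<le> v}. d v) \<le> 0"
  shows "(\<Sum>v\<in>V. d v) * h (Min V) \<le> (\<Sum>v\<in>V. d v * h v)"
  using assms
proof (induction V rule: finite_linorder_min_induct)
  case empty
  then show ?case by simp
next
  case (insert b A)
  show ?case
  proof (cases "A = {}")
    case True
    then show ?thesis by simp
  next
    case False
    have mono: "antimono_on A h"
      using insert.prems(2) by (rule monotone_on_subset) auto
    have tails: "\<forall>t\<in>A. (\<Sum>v\<in>{v\<in>A. t \<le> v}. d v) \<le> 0"
    proof
      fix t assume "t \<in> A"
      then have "{v\<in>insert b A. t \<le> v} = {v\<in>A. t \<le> v}" using insert.hyps(2) by force
      then show "(\<Sum>v\<in>{v\<in>A. t \<le> v}. d v) \<le> 0" using insert.prems(3) \<open>t \<in> A\<close> by force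
    qed
    have MinA: "Min A \<in> A" using False insert.hyps(1) by simp
    have "{v\<in>A. Min A \<le> v} = A" using insert.hyps(1) by auto
    then have sumA: "(\<Sum>v\<in>A. d v) \<le> 0" using tails MinA by force
    have hb: "h (Min A) \<le> h b"
      by (rule monotone_onD[OF insert.prems(2)]) (use MinA insert.hyps(2) in auto)
    have Min_insert: "Min (insert b A) = b"
      using insert.hyps False by (simp add: min_def) (meson Min_in less_le_not_le)
    have bA: "b \<notin> A" using insert.hyps(2) by auto
    have "(\<Sum>v\<in>insert b A. d v) * h (Min (insert b A)) = d b * h b + (\<Sum>v\<in>A. d v) * h b"
      using insert.hyps(1) bA Min_insert by (simp add: algebra_simps)
    also have "\<dots> \<le> d b * h b + (\<Sum>v\<in>A. d v) * h (Min A)"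
      using sumA hb by (simp add: mult_left_mono_neg)
    also have "\<dots> \<le> d b * h b + (\<Sum>v\<in>A. d v * h v)"
      using insert.IH[OF False mono tails] by simp
    also have "\<dots> = (\<Sum>v\<in>insert b A. d v * h v)"
      using insert.hyps(1) bA by simp
    finally show ?thesis .
  qed
qed

lemma sum_mult_antimono_le_of_tails_le:
  fixes h \<mu> \<nu> :: "'a::linorder \<Rightarrow> real"
  assumes "finite V" "antimono_on V h"
    and "\<And>t. (\<Sum>v\<in>{v\<in>V. t \<le> v}. \<nu> v) \<le> (\<Sum>v\<in>{v\<in>V. t \<le> v}. \<mu> v)"
    and "(\<Sum>v\<in>V. \<nu> v) = (\<Sum>v\<in>V. \<mu> v)"
  shows "(\<Sum>v\<in>V. \<mu> v * h v) \<le> (\<Sum>v\<in>V. \<nu> v * h v)"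
proof (cases "V = {}")
  case True
  then show ?thesis by simp
next
  case False
  have "\<forall>t\<in>V. (\<Sum>v\<in>{v\<in>V. t \<le> v}. \<nu> v - \<mu> v) \<le> 0"
    using assms(3) by (simp add: sum_subtractf)
  from sum_mult_antimono_ge_of_tails_nonpos[OF assms(1) False assms(2) this]
  have "0 \<le> (\<Sum>v\<in>V. (\<nu> v - \<mu> v) * h v)" using assms(4) by (simp add: sum_subtractf)
  then show ?thesis by (simp add: left_diff_distrib sum_subtractf)
qed

lemma sum_point_mass:
  fixes g :: "'a \<Rightarrow> real"
  assumes "finite V" "u \<in> V \<or> c = 0"
  shows "(\<Sum>v\<in>V. (if v = u then c else 0) * g v) = c * g u"
proof -
  have "(\<Sum>v\<in>V. (if v = u then c else 0) * g v) = (\<Sum>v\<in>V. if v = u then c * g u else 0)"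
    by (intro sum.cong) auto
  also have "\<dots> = c * g u" using assms by auto
  finally show ?thesis .
qed

lemma sum_group_tail:
  fixes \<kappa> :: "'c \<Rightarrow> 'a::linorder" and g :: "'c \<Rightarrow> real"
  assumes "finite K" "finite W" "\<kappa> ` K \<subseteq> W"
  shows "(\<Sum>v\<in>{v\<in>W. t \<le> v}. \<Sum>c\<in>{c\<in>K. \<kappa> c = v}. g c) = (\<Sum>c\<in>{c\<in>K. t \<le> \<kappa> c}. g c)"
proof -
  have "(\<Sum>c\<in>{c\<in>K. t \<le> \<kappa> c}. g c)
      = (\<Sum>v\<in>{v\<in>W. t \<le> v}. \<Sum>c\<in>{c\<in>{c\<in>K. t \<le> \<kappa> c}. \<kappa> c = v}. g c)"
    using assms by (intro sum.group[symmetric]) auto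
  also have "\<dots> = (\<Sum>v\<in>{v\<in>W. t \<le> v}. \<Sum>c\<in>{c\<in>K. \<kappa> c = v}. g c)"
    by (intro sum.cong refl arg_cong[where f = "\<lambda>A. sum g A"]) auto
  finally show ?thesis by simp
qed

definition is_subdist :: "('a \<Rightarrow> real) \<Rightarrow> bool" where
  "is_subdist p \<longleftrightarrow> finite (supp p) \<and> (\<forall>x. 0 \<le> p x) \<and> sum p (supp p) \<le> 1"

definition masses :: "('a \<Rightarrow> real) \<Rightarrow> real set" where
  "masses p = p ` supp p"

definition level_mass :: "('a \<Rightarrow> real) \<Rightarrow> (real \<Rightarrow> bool) \<Rightarrow> real" where
  "level_mass p P = (\<Sum>a\<in>supp p. if P (p a) then p a else 0)"

lemma in_masses: "p a \<noteq> 0 \<Longrightarrow> p a \<in> masses p"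
  unfolding masses_def supp_def by (rule imageI) simp

lemma is_dist_imp_is_subdist: "is_dist p \<Longrightarrow> is_subdist p"
  unfolding is_dist_def is_subdist_def by simp

lemma finite_masses: "is_subdist p \<Longrightarrow> finite (masses p)"
  unfolding is_subdist_def masses_def by simp

lemma masses_subset_Ioc:
  assumes "is_subdist p" shows "masses p \<subseteq> {0<..1}"
proof
  fix v assume "v \<in> masses p"
  then obtain a where a: "a \<in> supp p" "v = p a" unfolding masses_def by auto
  have p: "\<forall>x. 0 \<le> p x" "finite (supp p)" "sum p (supp p) \<le> 1"
    using assms unfolding is_subdist_def by blast+
  have "p a \<le> sum p (supp p)" using p a by (intro member_le_sum) auto
  then show "v \<in> {0<..1}" using a p by (auto simp: supp_def less_le)
qed

lemma is_subdist_decrease: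
  assumes "is_subdist p" "0 \<le> d" "d \<le> p a"
  shows "is_subdist (p(a := p a - d))"
proof -
  have p: "\<forall>x. 0 \<le> p x" "finite (supp p)" "sum p (supp p) \<le> 1"
    using assms(1) unfolding is_subdist_def by blast+
  have supp: "supp (p(a := p a - d)) \<subseteq> supp p" using assms by (auto simp: supp_def)
  have "sum (p(a := p a - d)) (supp (p(a := p a - d))) = sum (p(a := p a - d)) (supp p)"
    using supp p by (intro sum.mono_neutral_left) (auto simp: supp_def)
  also have "\<dots> \<le> sum p (supp p)" using assms by (intro sum_mono) auto
  finally show ?thesis using p supp assms unfolding is_subdist_def by (auto intro: finite_subset)
qed

lemma maxmass_ge:
  assumes "finite (supp p)" shows "0 \<le> maxmass p" "p x \<le> maxmass p"
proof -
  have fin: "finite (insert 0 (p ` supp p))" using assms by simp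
  show nonneg: "0 \<le> maxmass p" unfolding maxmass_def using fin by (rule Max_ge) simp
  show "p x \<le> maxmass p"
  proof (cases "x \<in> supp p")
    case True
    then show ?thesis unfolding maxmass_def using fin by (intro Max_ge) auto
  next
    case False
    then show ?thesis using nonneg by (simp add: supp_def)
  qed
qed

lemma level_mass_cong:
  assumes "\<forall>v\<in>masses p. P v \<longleftrightarrow> Q v" shows "level_mass p P = level_mass p Q"
  unfolding level_mass_def using assms by (intro sum.cong) (auto simp: masses_def)

lemma level_mass_eq_0:
  assumes "\<forall>v\<in>masses p. \<not> P v" shows "level_mass p P = 0"
  unfolding level_mass_def using assms by (intro sum.neutral) (auto simp: masses_def)

lemma level_mass_mono:
  assumes "\<forall>x. 0 \<le> p x" "\<And>v. P v \<Longrightarrow> Q v" shows "level_mass p P \<le> level_mass p Q"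
  unfolding level_mass_def using assms by (intro sum_mono) auto

lemma level_mass_nonneg: "\<forall>x. 0 \<le> p x \<Longrightarrow> 0 \<le> level_mass p P"
  unfolding level_mass_def by (intro sum_nonneg) auto

lemma level_mass_ge_0: "\<forall>x. 0 \<le> p x \<Longrightarrow> level_mass p ((\<le>) 0) = sum p (supp p)"
  unfolding level_mass_def by (intro sum.cong) auto

lemma level_mass_superset:
  assumes "finite S" "supp p \<subseteq> S"
  shows "level_mass p P = (\<Sum>a\<in>S. if P (p a) then p a else 0)"
  unfolding level_mass_def using assms
  by (intro sum.mono_neutral_left) (auto simp: supp_def)

lemma level_mass_update:
  assumes "finite (supp p)"
  shows "level_mass (p(a := w)) P
           = level_mass p P - (if P (p a) then p a else 0) + (if P w then w else 0)"
proof -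
  define g where "g u = (if P u then u else 0)" for u
  define S where "S = insert a (supp p)"
  have S: "finite S" "a \<in> S" "supp p \<subseteq> S" "supp (p(a := w)) \<subseteq> S"
    using assms by (auto simp: S_def supp_def)
  have "level_mass (p(a := w)) P = g w + (\<Sum>x\<in>S - {a}. g ((p(a := w)) x))"
    unfolding level_mass_superset[OF S(1,4)] g_def[symmetric] sum.remove[OF S(1,2)] by simp
  also have "\<dots> = g w + (\<Sum>x\<in>S - {a}. g (p x))"
    by (intro arg_cong2[where f = "(+)"] sum.cong) auto
  also have "\<dots> = g w + (level_mass p P - g (p a))"
    unfolding level_mass_superset[OF S(1,3)] g_def[symmetric] sum.remove[OF S(1,2)] by simp
  finally show ?thesis by (simp add: g_def)
qed

definition common_mass :: "('a \<Rightarrow> real) \<Rightarrow> ('b \<Rightarrow> real) \<Rightarrow> (real \<Rightarrow> bool) \<Rightarrow> real" where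
  "common_mass p q P = min (level_mass p P) (level_mass q P)"

text \<open>The point masses of the measure on \<open>(0, 1]\<close> whose tail function is
  \<open>t \<mapsto> common_mass p q ((\<le>) t)\<close>.\<close>
definition common_jump :: "('a \<Rightarrow> real) \<Rightarrow> ('b \<Rightarrow> real) \<Rightarrow> real \<Rightarrow> real" where
  "common_jump p q v = common_mass p q ((\<le>) v) - common_mass p q ((<) v)"

lemma common_mass_cong:
  assumes "\<forall>v\<in>masses p \<union> masses q. P v \<longleftrightarrow> Q v"
  shows "common_mass p q P = common_mass p q Q"
  using assms level_mass_cong[of p P Q] level_mass_cong[of q P Q] by (simp add: common_mass_def)

lemma common_jump_commute: "common_jump p q v = common_jump q p v"
  unfolding common_jump_def common_mass_def by (simp add: min.commute)

lemma common_jump_nonneg: "\<forall>x. 0 \<le> p x \<Longrightarrow> \<forall>x. 0 \<le> q x \<Longrightarrow> 0 \<le> common_jump p q v"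
  unfolding common_jump_def common_mass_def
  using level_mass_mono[of p "(<) v" "(\<le>) v"] level_mass_mono[of q "(<) v" "(\<le>) v"] by force

lemma common_jump_eq_0:
  assumes "v \<notin> masses p \<union> masses q" shows "common_jump p q v = 0"
proof -
  have "common_mass p q ((\<le>) v) = common_mass p q ((<) v)"
    using assms by (auto intro!: common_mass_cong simp: le_less)
  then show ?thesis unfolding common_jump_def by simp
qed

lemma upper_set_insert_min:
  fixes W :: "'a::linorder set"
  assumes U: "{v\<in>W. t \<le> v} = insert b A" and b: "\<forall>a\<in>A. b < a"
  shows "A = {v\<in>W. b < v}" and "\<forall>v\<in>W. t \<le> v \<longleftrightarrow> b \<le> v"
proof -
  have upper: "v \<in> insert b A \<longleftrightarrow> v \<in> W \<and> t \<le> v" for v unfolding U[symmetric] by simp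
  have tb: "t \<le> b" using upper[of b] by simp
  show "A = {v\<in>W. b < v}"
  proof (intro set_eqI iffI)
    fix v assume "v \<in> A"
    then show "v \<in> {v\<in>W. b < v}" using upper[of v] b by simp
  next
    fix v assume "v \<in> {v\<in>W. b < v}"
    then have "v \<in> W" "b < v" by simp_all
    moreover from this(2) have "t \<le> v" using tb by (meson less_imp_le order_trans)
    ultimately show "v \<in> A" using upper[of v] by auto
  qed
  show "\<forall>v\<in>W. t \<le> v \<longleftrightarrow> b \<le> v"
  proof (intro ballI iffI)
    fix v assume "v \<in> W" "t \<le> v"
    then show "b \<le> v" using upper[of v] b by auto
  next
    fix v assume "b \<le> v"
    with tb show "t \<le> v" by (rule order_trans)
  qed
qed

lemma sum_common_jump_tail:
  assumes "finite W" "masses p \<union> masses q \<subseteq> W"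
  shows "(\<Sum>v\<in>{v\<in>W. t \<le> v}. common_jump p q v) = common_mass p q ((\<le>) t)"
proof -
  have "(\<Sum>v\<in>U. common_jump p q v) = common_mass p q ((\<le>) t)"
    if "finite U" "{v\<in>W. t \<le> v} = U" for U t
    using that
  proof (induction U arbitrary: t rule: finite_linorder_min_induct)
    case empty
    then have "\<forall>v\<in>masses p \<union> masses q. \<not> t \<le> v" using assms(2) by auto
    then show ?case by (simp add: common_mass_def level_mass_eq_0)
  next
    case (insert b A)
    note A = upper_set_insert_min[OF insert.prems insert.hyps(2)]
    have on_masses: "\<forall>v\<in>masses p \<union> masses q. P v" if "\<forall>v\<in>W. P v" for P
      using that assms(2) by blast
    have below_b: "common_mass p q ((\<le>) t) = common_mass p q ((\<le>) b)"
      using on_masses[OF A(2)] by (rule common_mass_cong)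
    have above_b: "(\<Sum>v\<in>A. common_jump p q v) = common_mass p q ((<) b)"
    proof (cases "A = {}")
      case True
      then have "\<forall>v\<in>masses p \<union> masses q. \<not> b < v" using A(1) assms(2) by auto
      then show ?thesis using True by (simp add: common_mass_def level_mass_eq_0)
    next
      case False
      have in_A: "v \<in> A \<longleftrightarrow> v \<in> W \<and> b < v" for v by (simp add: A(1))
      have MinA: "Min A \<in> A" "\<forall>v\<in>A. Min A \<le> v" using insert.hyps(1) False by auto
      have Min_iff: "\<forall>v\<in>W. Min A \<le> v \<longleftrightarrow> b < v"
      proof (intro ballI iffI)
        fix v assume "Min A \<le> v"
        moreover have "b < Min A" using MinA(1) in_A by blast
        ultimately show "b < v" by (rule less_le_trans[rotated])
      next
        fix v assume "v \<in> W" "b < v"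
        then show "Min A \<le> v" using MinA(2) in_A by blast
      qed
      then have "{v\<in>W. Min A \<le> v} = A" using in_A by blast
      then have "(\<Sum>v\<in>A. common_jump p q v) = common_mass p q ((\<le>) (Min A))"
        by (rule insert.IH)
      also have "\<dots> = common_mass p q ((<) b)"
        using on_masses[OF Min_iff] by (rule common_mass_cong)
      finally show ?thesis .
    qed
    have "b \<notin> A" using insert.hyps(2) by auto
    then show ?case
      using insert.hyps(1) below_b above_b by (simp add: common_jump_def)
  qed
  then show ?thesis using assms(1) by simp
qed

text \<open>\<open>w\<close> is the leftover of \<open>q b\<close> if it falls below \<open>p a\<close>; a larger leftover does not
  change the common tails, which then only lose the atom at \<open>p a\<close>.\<close>
lemma common_mass_remove_max:
  fixes p :: "'a \<Rightarrow> real" and q :: "'b \<Rightarrow> real"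
  assumes p: "is_subdist p" and q: "is_subdist q"
    and max: "\<forall>a'. p a' \<le> p a" and pos: "0 < p a" and le: "p a \<le> q b"
  defines "w \<equiv> if q b - p a < p a then q b - p a else 0"
  shows "common_mass p q ((\<le>) t) - (if t \<le> p a then p a + w else 0) + (if t \<le> w then w else 0)
           \<le> common_mass (p(a := 0)) (q(b := q b - p a)) ((\<le>) t)"
    and "common_mass (p(a := 0)) (q(b := q b - p a)) ((\<le>) 0) = common_mass p q ((\<le>) 0) - p a"
proof -
  have fin: "finite (supp p)" "finite (supp q)" and q_nonneg: "\<forall>x. 0 \<le> q x"
    using p q unfolding is_subdist_def by blast+
  have q'_nonneg: "0 \<le> level_mass (q(b := q b - p a)) P" for P
    using q_nonneg le by (intro level_mass_nonneg) simp
  have p': "level_mass (p(a := 0)) ((\<le>) t) = level_mass p ((\<le>) t) - (if t \<le> p a then p a else 0)"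
    for t using level_mass_update[OF fin(1), of a 0] by simp
  have q': "level_mass (q(b := q b - p a)) ((\<le>) t) = level_mass q ((\<le>) t)
      - (if t \<le> q b then q b else 0) + (if t \<le> q b - p a then q b - p a else 0)" for t
    using level_mass_update[OF fin(2)] by simp
  have above_max: "level_mass p ((\<le>) t) = 0" if "p a < t" for t
  proof (rule level_mass_eq_0)
    have "p a' < t" for a' using max that by (meson le_less_trans)
    then show "\<forall>v\<in>masses p. \<not> t \<le> v" by (auto simp: masses_def not_le)
  qed
  have w: "0 \<le> w" "w < p a" using le pos unfolding w_def by auto
  show "common_mass p q ((\<le>) t) - (if t \<le> p a then p a + w else 0) + (if t \<le> w then w else 0)
           \<le> common_mass (p(a := 0)) (q(b := q b - p a)) ((\<le>) t)"
  proof (cases "t \<le> p a")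
    case True
    have gap: "(if t \<le> w then w else 0) - w \<le> (if t \<le> q b - p a then q b - p a else 0) - (q b - p a)"
      "(if t \<le> w then w else 0) - w \<le> 0"
      using True le w(1) unfolding w_def by auto
    have "t \<le> q b" using True le by simp
    then show ?thesis
      unfolding common_mass_def min.bounded_iff p'[of t] q'[of t] if_P[OF True] if_P[OF \<open>t \<le> q b\<close>]
      using gap min.cobounded1[of "level_mass p ((\<le>) t)"] min.cobounded2[of _ "level_mass q ((\<le>) t)"]
      by linarith
  next
    case False
    have "\<not> t \<le> w" using False w(2) by simp
    then show ?thesis
      unfolding common_mass_def p'[of t] above_max[OF False[unfolded not_le]] if_not_P[OF False]
      using level_mass_nonneg[OF q_nonneg, of "(\<le>) t"] q'_nonneg[of "(\<le>) t"]
      by simp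
  qed
  show "common_mass (p(a := 0)) (q(b := q b - p a)) ((\<le>) 0) = common_mass p q ((\<le>) 0) - p a"
    using pos le unfolding common_mass_def p'[of 0] q'[of 0] min_diff_distrib_left by simp
qed

definition potential :: "(real \<Rightarrow> real) \<Rightarrow> ('a \<Rightarrow> real) \<Rightarrow> ('b \<Rightarrow> real) \<Rightarrow> real" where
  "potential f p q = (\<Sum>v\<in>masses p \<union> masses q. common_jump p q v * (f v / v))"

lemma potential_commute: "potential f p q = potential f q p"
  by (simp only: potential_def Un_commute[of "masses p"] common_jump_commute[of p q])

lemma potential_superset:
  assumes "finite V" "masses p \<union> masses q \<subseteq> V"
  shows "potential f p q = (\<Sum>v\<in>V. common_jump p q v * (f v / v))"
  unfolding potential_def
proof (rule sum.mono_neutral_left[OF assms])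
  show "\<forall>v\<in>V - (masses p \<union> masses q). common_jump p q v * (f v / v) = 0"
    by (simp add: common_jump_eq_0)
qed

locale cost_function =
  fixes f :: "real \<Rightarrow> real" and r :: real
  assumes concave: "concave_on {0..1} f"
    and zero: "f 0 = 0"
    and pos: "\<And>x. 0 < x \<Longrightarrow> x \<le> 1 \<Longrightarrow> 0 < f x"
    and ratio_le: "\<And>s t. 0 < s \<Longrightarrow> s < t \<Longrightarrow> t \<le> 1 \<Longrightarrow> f s / f t - s / t \<le> r"
begin

lemma slope_antimono:
  assumes "0 < s" "s \<le> t" "t \<le> 1"
  shows "f t / t \<le> f s / s"
proof -
  have "(1 - s / t) * f 0 + s / t * f t \<le> f ((1 - s / t) *\<^sub>R 0 + (s / t) *\<^sub>R t)"
    using assms by (intro concave_onD[OF concave]) auto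
  then have "s / t * f t \<le> f s" using assms zero by simp
  then show ?thesis using assms by (simp add: field_simps)
qed

lemma antimono_on_slope: "V \<subseteq> {0<..1} \<Longrightarrow> antimono_on V (\<lambda>v. f v / v)"
  by (intro monotone_onI slope_antimono) auto

lemma r_nonneg: "0 \<le> r"
proof -
  have f1: "0 < f 1" by (rule pos) auto
  have "f 1 / 1 \<le> f (1/2) / (1/2)" by (rule slope_antimono) auto
  moreover have "f (1/2) / f 1 - (1/2) / 1 \<le> r" by (rule ratio_le) auto
  ultimately have "0 \<le> r * f 1" using f1 by (simp add: field_simps)
  then show ?thesis using f1 by (simp add: zero_le_mult_iff)
qed

lemma concavity_gap_le:
  assumes "0 \<le> z" "z < x" "x \<le> 1"
  shows "f z - z / x * f x \<le> r * f x"
proof (cases "z = 0")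
  case True
  then show ?thesis using zero r_nonneg pos[of x] assms by simp
next
  case False
  have "0 < f x" using pos assms by simp
  moreover have "f z / f x - z / x \<le> r" using ratio_le assms False by simp
  ultimately show ?thesis by (simp add: field_simps)
qed

lemma potential_nonneg:
  assumes "is_subdist p" "is_subdist q" shows "0 \<le> potential f p q"
  unfolding potential_def
proof (intro sum_nonneg mult_nonneg_nonneg)
  fix v assume "v \<in> masses p \<union> masses q"
  then have "0 < v" "v \<le> 1" using masses_subset_Ioc[OF assms(1)] masses_subset_Ioc[OF assms(2)] by auto
  then show "0 \<le> f v / v" using pos by (simp add: less_imp_le)
  show "0 \<le> common_jump p q v" using assms by (intro common_jump_nonneg) (auto simp: is_subdist_def)
qed

lemma potential_le_of_tails:
  assumes "finite V" "V \<subseteq> {0<..1}" "masses p \<union> masses q \<subseteq> V"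
    and "\<And>t. (\<Sum>v\<in>{v\<in>V. t \<le> v}. \<nu> v) \<le> common_mass p q ((\<le>) t)"
    and "(\<Sum>v\<in>V. \<nu> v) = common_mass p q ((\<le>) 0)"
  shows "potential f p q \<le> (\<Sum>v\<in>V. \<nu> v * (f v / v))"
proof -
  have tails: "(\<Sum>v\<in>{v\<in>V. t \<le> v}. common_jump p q v) = common_mass p q ((\<le>) t)" for t
    using sum_common_jump_tail[OF assms(1,3)] .
  have "{v\<in>V. 0 \<le> v} = V" using assms(2) by auto
  then have total: "(\<Sum>v\<in>V. common_jump p q v) = common_mass p q ((\<le>) 0)"
    using tails[of 0] by simp
  show ?thesis
    unfolding potential_superset[OF assms(1,3)]
    by (rule sum_mult_antimono_le_of_tails_le[OF assms(1) antimono_on_slope[OF assms(2)]])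
      (use tails total assms(4,5) in auto)
qed

lemma potential_remove_max_le:
  fixes p :: "'a \<Rightarrow> real" and q :: "'b \<Rightarrow> real"
  assumes p: "is_subdist p" and q: "is_subdist q"
    and max: "\<forall>a'. p a' \<le> p a" and pos: "0 < p a" and le: "p a \<le> q b"
  defines "w \<equiv> if q b - p a < p a then q b - p a else 0"
  shows "potential f (p(a := 0)) (q(b := q b - p a))
           \<le> potential f p q - (p a + w) * (f (p a) / p a) + w * (f w / w)"
proof -
  define q' where "q' = q(b := q b - p a)"
  define V where "V = masses p \<union> masses q \<union> masses q'"
  define \<nu> where "\<nu> v = common_jump p q v - (if v = p a then p a + w else 0) + (if v = w then w else 0)"
    for v
  have q': "is_subdist q'" using is_subdist_decrease[OF q, of "p a" b] pos le by (simp add: q'_def)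
  have V: "finite V" "V \<subseteq> {0<..1}" "masses p \<union> masses q \<subseteq> V"
    using finite_masses[OF p] finite_masses[OF q] finite_masses[OF q']
      masses_subset_Ioc[OF p] masses_subset_Ioc[OF q] masses_subset_Ioc[OF q'] by (auto simp: V_def)
  have "masses (p(a := 0)) \<subseteq> masses p" by (auto simp: masses_def supp_def)
  then have V': "masses (p(a := 0)) \<union> masses q' \<subseteq> V" by (auto simp: V_def)
  have pa: "p a \<in> V" using pos in_masses[of p a] by (auto simp: V_def)
  have "w = 0 \<or> w = q' b" by (simp add: w_def q'_def)
  then have w_in: "w \<in> V \<or> w = 0" using in_masses[of q' b] by (auto simp: V_def)
  have tails: "(\<Sum>v\<in>{v\<in>V. t \<le> v}. \<nu> v)
      = common_mass p q ((\<le>) t) - (if t \<le> p a then p a + w else 0) + (if t \<le> w then w else 0)" for t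
  proof -
    have "finite {v\<in>V. t \<le> v}" using V(1) by simp
    then have "(\<Sum>v\<in>{v\<in>V. t \<le> v}. \<nu> v) = common_mass p q ((\<le>) t)
        - (if p a \<in> {v\<in>V. t \<le> v} then p a + w else 0) + (if w \<in> {v\<in>V. t \<le> v} then w else 0)"
      by (simp only: \<nu>_def sum.distrib sum_subtractf sum_common_jump_tail[OF V(1,3)] sum.delta)
    then show ?thesis using pa w_in by auto
  qed
  have "potential f (p(a := 0)) q' \<le> (\<Sum>v\<in>V. \<nu> v * (f v / v))"
  proof (rule potential_le_of_tails[OF V(1,2) V'])
    show "(\<Sum>v\<in>{v\<in>V. t \<le> v}. \<nu> v) \<le> common_mass (p(a := 0)) q' ((\<le>) t)" for t
      unfolding tails q'_def w_def by (rule common_mass_remove_max(1)[OF p q max pos le])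
    have "{v\<in>V. 0 \<le> v} = V" "0 \<le> w" using V(2) le by (auto simp: w_def)
    then have "(\<Sum>v\<in>V. \<nu> v) = common_mass p q ((\<le>) 0) - p a"
      using tails[of 0] pos by simp
    then show "(\<Sum>v\<in>V. \<nu> v) = common_mass (p(a := 0)) q' ((\<le>) 0)"
      using common_mass_remove_max(2)[OF p q max pos le] by (simp add: q'_def)
  qed
  also have "\<dots> = (\<Sum>v\<in>V. common_jump p q v * (f v / v))
      - (\<Sum>v\<in>V. (if v = p a then p a + w else 0) * (f v / v))
      + (\<Sum>v\<in>V. (if v = w then w else 0) * (f v / v))"
    by (simp only: \<nu>_def distrib_right left_diff_distrib sum.distrib sum_subtractf)
  also have "\<dots> = potential f p q - (p a + w) * (f (p a) / p a) + w * (f w / w)"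
    using pa by (simp only: sum_point_mass[OF V(1)] potential_superset[OF V(1,3)] w_in simp_thms)
  finally show ?thesis unfolding q'_def .
qed

lemma potential_remove_max:
  fixes p :: "'a \<Rightarrow> real" and q :: "'b \<Rightarrow> real"
  assumes p: "is_subdist p" and q: "is_subdist q"
    and max: "\<forall>a'. p a' \<le> p a" and pos: "0 < p a" and le: "p a \<le> q b"
  shows "(1 - r) * f (p a) + potential f (p(a := 0)) (q(b := q b - p a)) \<le> potential f p q"
proof -
  define w where "w = (if q b - p a < p a then q b - p a else 0)"
  have w: "0 \<le> w" "w < p a" using le pos by (simp_all add: w_def)
  have "p a \<le> 1" using masses_subset_Ioc[OF p] in_masses[of p a] pos by auto
  have "potential f (p(a := 0)) (q(b := q b - p a))
      \<le> potential f p q - (p a + w) * (f (p a) / p a) + w * (f w / w)"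
    using potential_remove_max_le[OF p q max pos le] unfolding w_def .
  also have "\<dots> = potential f p q - f (p a) + (f w - w / p a * f (p a))"
    using pos w(1) zero by (cases "w = 0") (simp_all add: field_simps)
  also have "\<dots> \<le> potential f p q - f (p a) + r * f (p a)"
    using concavity_gap_le[OF w \<open>p a \<le> 1\<close>] by simp
  finally show ?thesis unfolding left_diff_distrib mult_1 by linarith
qed

lemma greedy_run_potential:
  "greedy_run p q G \<Longrightarrow> is_subdist p \<Longrightarrow> is_subdist q
    \<Longrightarrow> (1 - r) * sum_list (map f G) \<le> potential f p q"
proof (induction rule: greedy_run.induct)
  case (stop p q)
  then show ?case using potential_nonneg by simp
next
  case (step r' p q a b G)
  have fin: "finite (supp p)" "finite (supp q)" using step.prems by (auto simp: is_subdist_def)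
  have max: "\<forall>a'. p a' \<le> p a" "\<forall>b'. q b' \<le> q b"
    using maxmass_ge(2)[OF fin(1)] maxmass_ge(2)[OF fin(2)]
    unfolding step.hyps(3,4)[symmetric] by blast+
  have r'_le: "r' \<le> p a" "r' \<le> q b" using step.hyps(1,3,4) by simp_all
  have "0 \<le> r'" using step.hyps(1) maxmass_ge(1)[OF fin(1)] maxmass_ge(1)[OF fin(2)] by simp
  with step.hyps(2) have r'_pos: "0 < r'" by simp
  have "is_subdist (p(a := p a - r'))" "is_subdist (q(b := q b - r'))"
    using is_subdist_decrease[OF step.prems(1)] is_subdist_decrease[OF step.prems(2)] r'_pos r'_le by simp_all
  then have "(1 - r) * sum_list (map f G) \<le> potential f (p(a := p a - r')) (q(b := q b - r'))"
    by (rule step.IH)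
  moreover have "(1 - r) * f r' + potential f (p(a := p a - r')) (q(b := q b - r'))
      \<le> potential f p q"
  proof (cases "p a \<le> q b")
    case True
    then have "r' = p a" using step.hyps(1,3,4) by simp
    have "(1 - r) * f (p a) + potential f (p(a := 0)) (q(b := q b - p a)) \<le> potential f p q"
      by (rule potential_remove_max[OF step.prems max(1)]) (use r'_pos \<open>r' = p a\<close> True in simp_all)
    then show ?thesis using \<open>r' = p a\<close> by simp
  next
    case False
    then have "r' = q b" using step.hyps(1,3,4) by simp
    have "(1 - r) * f (q b) + potential f (q(b := 0)) (p(a := p a - q b)) \<le> potential f q p"
      by (rule potential_remove_max[OF step.prems(2,1) max(2)]) (use r'_pos \<open>r' = q b\<close> False in simp_all)
    then show ?thesis
      using \<open>r' = q b\<close> potential_commute[of f q p] potential_commute[of f "q(b := 0)" "p(a := p a - q b)"]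
      by simp
  qed
  ultimately show ?case unfolding list.map sum_list.Cons distrib_left by linarith
qed
end

lemma supp_comp_swap: "supp (C \<circ> prod.swap) = prod.swap ` supp C"
  by (force simp: supp_def)

lemma coupling_swap:
  assumes "is_coupling C p q" shows "is_coupling (C \<circ> prod.swap) q p"
proof -
  have C: "finite (supp C)" "\<forall>c. 0 \<le> C c" "sum C (supp C) = 1"
    using assms unfolding is_coupling_def is_dist_def by blast+
  have "sum (C \<circ> prod.swap) (supp (C \<circ> prod.swap)) = sum C (supp C)"
    unfolding supp_comp_swap by (subst sum.reindex) (auto simp: comp_def)
  then have "is_dist (C \<circ> prod.swap)"
    using C unfolding is_dist_def supp_comp_swap by simp
  then show ?thesis using assms unfolding is_coupling_def by simp
qed

lemma coupling_row_sum:
  assumes "is_coupling C p q" shows "(\<Sum>c\<in>{c\<in>supp C. fst c = a}. C c) = p a"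
proof -
  have "{c\<in>supp C. fst c = a} = Pair a ` {b. C (a, b) \<noteq> 0}" by (auto simp: supp_def)
  then show ?thesis
    using assms unfolding is_coupling_def by (simp add: sum.reindex inj_on_def)
qed

lemma coupling_le_fst:
  assumes C: "is_coupling C p q" and c: "c \<in> supp C"
  shows "0 < C c" "C c \<le> p (fst c)"
proof -
  have fin: "finite (supp C)" and nonneg: "\<forall>c. 0 \<le> C c"
    using C unfolding is_coupling_def is_dist_def by blast+
  show "0 < C c" using nonneg[rule_format, of c] c by (simp add: supp_def less_le)
  have "C c \<le> (\<Sum>d\<in>{d\<in>supp C. fst d = fst c}. C d)"
    using fin nonneg c by (intro member_le_sum) auto
  then show "C c \<le> p (fst c)" unfolding coupling_row_sum[OF C] .
qed

lemma coupling_supp_fst: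
  assumes C: "is_coupling C p q" shows "supp p = fst ` supp C"
proof
  show "fst ` supp C \<subseteq> supp p"
    using coupling_le_fst[OF C] by (force simp: supp_def)
  show "supp p \<subseteq> fst ` supp C"
  proof
    fix a assume "a \<in> supp p"
    then have "(\<Sum>c\<in>{c\<in>supp C. fst c = a}. C c) \<noteq> 0"
      unfolding coupling_row_sum[OF C] by (simp add: supp_def)
    then have "{c\<in>supp C. fst c = a} \<noteq> {}" by force
    then obtain c where "c \<in> supp C" "fst c = a" by blast
    then show "a \<in> fst ` supp C" by blast
  qed
qed

lemma coupling_level_mass_fst:
  assumes C: "is_coupling C p q"
  shows "(\<Sum>c\<in>{c\<in>supp C. P (p (fst c))}. C c) = level_mass p P"
proof -
  have fin: "finite (supp C)" using C unfolding is_coupling_def is_dist_def by blast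
  have "(\<Sum>c\<in>{c\<in>supp C. P (p (fst c))}. C c)
      = (\<Sum>a\<in>supp p. \<Sum>c\<in>{c\<in>{c\<in>supp C. P (p (fst c))}. fst c = a}. C c)"
    unfolding coupling_supp_fst[OF C] using fin by (intro sum.group[symmetric]) auto
  also have "\<dots> = level_mass p P"
    unfolding level_mass_def
  proof (intro sum.cong refl)
    fix a
    show "(\<Sum>c\<in>{c\<in>{c\<in>supp C. P (p (fst c))}. fst c = a}. C c) = (if P (p a) then p a else 0)"
    proof (cases "P (p a)")
      case True
      then have "{c\<in>{c\<in>supp C. P (p (fst c))}. fst c = a} = {c\<in>supp C. fst c = a}" by auto
      then show ?thesis using True coupling_row_sum[OF C] by simp
    next
      case False
      then have "{c\<in>{c\<in>supp C. P (p (fst c))}. fst c = a} = {}" by auto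
      then show ?thesis using False by (simp only: sum.empty if_False)
    qed
  qed
  finally show ?thesis .
qed

lemma coupling_le_snd:
  assumes "is_coupling C p q" "c \<in> supp C" shows "C c \<le> q (snd c)"
  using coupling_le_fst(2)[OF coupling_swap[OF assms(1)], of "prod.swap c"] assms(2)
  by (simp add: supp_comp_swap)

lemma coupling_level_mass_snd:
  assumes "is_coupling C p q"
  shows "(\<Sum>c\<in>{c\<in>supp C. P (q (snd c))}. C c) = level_mass q P"
proof -
  have "{c\<in>supp (C \<circ> prod.swap). P (q (fst c))} = prod.swap ` {c\<in>supp C. P (q (snd c))}"
    by (auto simp: supp_comp_swap)
  then show ?thesis
    using coupling_level_mass_fst[OF coupling_swap[OF assms], of P]
    by (simp add: sum.reindex)
qed

lemma coupling_le_min: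
  assumes C: "is_coupling C p q" and c: "c \<in> supp C"
  shows "C c \<le> min (p (fst c)) (q (snd c))" "min (p (fst c)) (q (snd c)) \<in> masses p \<union> masses q"
proof -
  have "0 < C c" "C c \<le> p (fst c)" "C c \<le> q (snd c)"
    using coupling_le_fst[OF C c] coupling_le_snd[OF C c] by auto
  moreover from this have "p (fst c) \<in> masses p" "q (snd c) \<in> masses q" by (auto intro: in_masses)
  ultimately show "C c \<le> min (p (fst c)) (q (snd c))"
    "min (p (fst c)) (q (snd c)) \<in> masses p \<union> masses q" by (auto simp: min_def)
qed

context cost_function begin

lemma potential_le_coupling:
  assumes p: "is_dist p" and q: "is_dist q" and C: "is_coupling C p q"
  defines "\<kappa> \<equiv> \<lambda>c. min (p (fst c)) (q (snd c))"
  shows "potential f p q \<le> (\<Sum>c\<in>supp C. C c * (f (\<kappa> c) / \<kappa> c))"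
proof -
  define K where "K = supp C"
  define W where "W = masses p \<union> masses q"
  define \<mu> where "\<mu> v = (\<Sum>c\<in>{c\<in>K. \<kappa> c = v}. C c)" for v
  have sp: "is_subdist p" and sq: "is_subdist q" using p q by (simp_all add: is_dist_imp_is_subdist)
  have K: "finite K" "sum C K = 1" "\<forall>c. 0 \<le> C c"
    using C unfolding K_def is_coupling_def is_dist_def by blast+
  have W: "finite W" "W \<subseteq> {0<..1}"
    using finite_masses[OF sp] finite_masses[OF sq] masses_subset_Ioc[OF sp] masses_subset_Ioc[OF sq]
    by (auto simp: W_def)
  have \<kappa>W: "\<kappa> c \<in> W" if "c \<in> K" for c
    using coupling_le_min(2)[OF C] that by (simp add: \<kappa>_def W_def K_def)
  have group: "(\<Sum>v\<in>{v\<in>W. t \<le> v}. \<Sum>c\<in>{c\<in>K. \<kappa> c = v}. g c) = (\<Sum>c\<in>{c\<in>K. t \<le> \<kappa> c}. g c)"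
    for t and g :: "_ \<Rightarrow> real"
    using K(1) W(1) \<kappa>W by (intro sum_group_tail) auto
  have "{v\<in>W. 0 \<le> v} = W" "{c\<in>K. 0 \<le> \<kappa> c} = K" using W(2) \<kappa>W by force+
  then have whole: "(\<Sum>v\<in>W. \<Sum>c\<in>{c\<in>K. \<kappa> c = v}. g c) = (\<Sum>c\<in>K. g c)"
    for g :: "_ \<Rightarrow> real"
    using group[where t = 0] by simp
  have "potential f p q \<le> (\<Sum>v\<in>W. \<mu> v * (f v / v))"
  proof (rule potential_le_of_tails[OF W])
    show "(\<Sum>v\<in>{v\<in>W. t \<le> v}. \<mu> v) \<le> common_mass p q ((\<le>) t)" for t
    proof -
      have "(\<Sum>c\<in>{c\<in>K. t \<le> \<kappa> c}. C c) \<le> (\<Sum>c\<in>{c\<in>K. t \<le> p (fst c)}. C c)"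
        "(\<Sum>c\<in>{c\<in>K. t \<le> \<kappa> c}. C c) \<le> (\<Sum>c\<in>{c\<in>K. t \<le> q (snd c)}. C c)"
        using K by (auto intro!: sum_mono2 simp: \<kappa>_def)
      then have "(\<Sum>c\<in>{c\<in>K. t \<le> \<kappa> c}. C c) \<le> common_mass p q ((\<le>) t)"
        unfolding common_mass_def K_def
        by (simp add: coupling_level_mass_fst[OF C] coupling_level_mass_snd[OF C])
      then show ?thesis unfolding \<mu>_def group .
    qed
    have "level_mass p ((\<le>) 0) = 1" "level_mass q ((\<le>) 0) = 1"
      using p q by (simp_all add: is_dist_def level_mass_ge_0)
    then show "(\<Sum>v\<in>W. \<mu> v) = common_mass p q ((\<le>) 0)"
      unfolding \<mu>_def whole common_mass_def using K(2) by simp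
  qed (simp add: W_def)
  also have "\<dots> = (\<Sum>c\<in>K. C c * (f (\<kappa> c) / \<kappa> c))"
    unfolding \<mu>_def sum_distrib_right whole[symmetric] by (intro sum.cong refl) auto
  finally show ?thesis unfolding K_def .
qed

lemma potential_le_F_cost:
  assumes p: "is_dist p" and q: "is_dist q" and C: "is_coupling C p q"
  shows "potential f p q \<le> F_cost f C"
proof -
  have "potential f p q \<le> (\<Sum>c\<in>supp C. C c * (f (min (p (fst c)) (q (snd c))) / min (p (fst c)) (q (snd c))))"
    using potential_le_coupling[OF p q C] by simp
  also have "\<dots> \<le> (\<Sum>c\<in>supp C. f (C c))"
  proof (intro sum_mono)
    fix c assume c: "c \<in> supp C"
    have "min (p (fst c)) (q (snd c)) \<le> 1"
      using coupling_le_min(2)[OF C c] masses_subset_Ioc[OF is_dist_imp_is_subdist[OF p]]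
        masses_subset_Ioc[OF is_dist_imp_is_subdist[OF q]] by auto
    then have "f (min (p (fst c)) (q (snd c))) / min (p (fst c)) (q (snd c)) \<le> f (C c) / C c"
      using coupling_le_fst(1)[OF C c] coupling_le_min(1)[OF C c] by (intro slope_antimono) auto
    then show "C c * (f (min (p (fst c)) (q (snd c))) / min (p (fst c)) (q (snd c))) \<le> f (C c)"
      using coupling_le_fst(1)[OF C c] by (simp add: field_simps)
  qed
  also have "\<dots> = F_cost f C" by (simp add: F_cost_def)
  finally show ?thesis .
qed

end

theorem theorem5:
  fixes f :: "real \<Rightarrow> real" and r :: real
    and p :: "'a \<Rightarrow> real" and q :: "'b \<Rightarrow> real"
    and C :: "'a \<times> 'b \<Rightarrow> real" and G :: "real list"
  assumes conc: "concave_on {0..1} f"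
    and nonneg: "\<forall>x\<in>{0..1}. 0 \<le> f x"
    and f0: "f 0 = 0"
    and fpos: "\<forall>x. 0 < x \<and> x \<le> 1 \<longrightarrow> 0 < f x"
    and bdd: "bdd_above {f s / f t - s / t | s t. 0 < s \<and> s < t \<and> t \<le> 1}"
    and r_def: "r = Sup {f s / f t - s / t | s t. 0 < s \<and> s < t \<and> t \<le> 1}"
    and r_lt: "r < 1"
    and p: "is_dist p" and q: "is_dist q"
    and C: "is_coupling C p q"
    and G: "greedy_run p q G"
  shows "sum_list (map f G) \<le> 1 / (1 - r) * F_cost f C"
proof -
  interpret cost_function f r
  proof
    show "f s / f t - s / t \<le> r" if "0 < s" "s < t" "t \<le> 1" for s t
      unfolding r_def using that by (intro cSup_upper[OF _ bdd]) blast
  qed (use conc f0 fpos in auto)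
  have "(1 - r) * sum_list (map f G) \<le> potential f p q"
    using greedy_run_potential[OF G] p q by (simp add: is_dist_imp_is_subdist)
  also have "\<dots> \<le> F_cost f C"
    using potential_le_F_cost[OF p q C] .
  finally show ?thesis using r_lt by (simp add: field_simps)
qed

end
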